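(* Let $\Phi:\mathcal{K}^n\to\mathcal{K}^n$ be a continuous, translation invariant Minkowski valuation satisfying (VC), and for $K\in\mathcal{K}^n$ write $V_n(\Phi(\lambda K))=\sum_{j\ge 0}v_j^{\Phi}(K)\lambda^j$ for $\lambda>0$. Then: (i) if $\dim K<n$, then $v_l^{\Phi}(K)=0$ for all $l$; (ii) if $\dim K=n$, then $v_n^{\Phi}(K)\neq 0$; (iii) if $\dim K=n$, then $v_l^{\Phi}(K)=0$ for every $l\neq n$.
   Context: $\mathcal{K}^n$ is the space of convex bodies in $\mathbb{R}^n$ with the Hausdorff metric and Minkowski addition. A Minkowski valuation satisfies $\Phi(K)+\Phi(L)=\Phi(K\cup L)+\Phi(K\cap L)$ whenever $K,L,K\cup L\in\mathcal{K}^n$; translation invariant means $\Phi(K+t)=\Phi(K)$. For such $\Phi$ and fixed $K$, the function $\lambda\mapsto V_n(\Phi(\lambda K))$, $\lambda>0$, is a polynomial in $\lambda$ (this follows from McMullen's decomposition of the support function $h(\Phi(\lambda K),u)$ into homogeneous parts and the multilinear extension of mixed volumes); $v_j^{\Phi}(K)$ denotes its coefficient of $\lambda^j$. (VC): there are $c,C>0$ with $cV_n(K)\le V_n(\Phi(K))\le CV_n(K)$ for all $K$. $\dim$ is the dimension of the affine hull. *)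

theory Defs
  imports "HOL-Analysis.Analysis" "HOL-Library.Set_Algebras" "HOL-Computational_Algebra.Polynomial"
begin

definition convex_body :: "'a::euclidean_space set \<Rightarrow> bool" where
  "convex_body K \<longleftrightarrow> K \<noteq> {} \<and> compact K \<and> convex K"

definition hausdorff_dist :: "'a::euclidean_space set \<Rightarrow> 'a set \<Rightarrow> real" where
  "hausdorff_dist A B = max (SUP x\<in>A. infdist x B) (SUP y\<in>B. infdist y A)"

definition hausdorff_continuous :: "('a::euclidean_space set \<Rightarrow> 'a set) \<Rightarrow> bool" where
  "hausdorff_continuous \<Phi> \<longleftrightarrow>
     (\<forall>K. convex_body K \<longrightarrow> (\<forall>e>0. \<exists>d>0. \<forall>L. convex_body L \<longrightarrow>
        hausdorff_dist K L < d \<longrightarrow> hausdorff_dist (\<Phi> K) (\<Phi> L) < e))"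

text \<open>Minkowski valuation on convex bodies (Minkowski addition is set addition).\<close>
definition minkowski_valuation :: "('a::euclidean_space set \<Rightarrow> 'a set) \<Rightarrow> bool" where
  "minkowski_valuation \<Phi> \<longleftrightarrow>
     (\<forall>K. convex_body K \<longrightarrow> convex_body (\<Phi> K)) \<and>
     (\<forall>K L. convex_body K \<and> convex_body L \<and> convex_body (K \<union> L) \<longrightarrow>
        \<Phi> K + \<Phi> L = \<Phi> (K \<union> L) + \<Phi> (K \<inter> L))"

definition translation_invariant :: "('a::euclidean_space set \<Rightarrow> 'a set) \<Rightarrow> bool" where
  "translation_invariant \<Phi> \<longleftrightarrow>
     (\<forall>K t. convex_body K \<longrightarrow> \<Phi> ((\<lambda>x. x + t) ` K) = \<Phi> K)"

definition volume_condition :: "('a::euclidean_space set \<Rightarrow> 'a set) \<Rightarrow> bool" where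
  "volume_condition \<Phi> \<longleftrightarrow>
     (\<exists>c C. c > 0 \<and> C > 0 \<and> (\<forall>K. convex_body K \<longrightarrow>
        c * measure lebesgue K \<le> measure lebesgue (\<Phi> K) \<and>
        measure lebesgue (\<Phi> K) \<le> C * measure lebesgue K))"

end

theory Submission imports Defs begin

text \<open>
  By (VC) and the homogeneity of volume, \<open>V\<^sub>n(\<Phi>(\<lambda>K))\<close> is squeezed between \<open>c \<lambda>\<^sup>n V\<^sub>n(K)\<close> and
  \<open>C \<lambda>\<^sup>n V\<^sub>n(K)\<close> for all \<open>\<lambda> > 0\<close>, and \<open>V\<^sub>n(K) > 0\<close> exactly when \<open>dim K = n\<close>. If \<open>V\<^sub>n(K) = 0\<close> the
  polynomial vanishes on \<open>(0,\<infinity>)\<close>. Otherwise a polynomial trapped between two positive multiples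
  of \<open>\<lambda>\<^sup>n\<close> must be a monomial of degree \<open>n\<close>: comparing the behaviour at \<open>0\<close> forces its
  vanishing order at \<open>0\<close> to be \<open>n\<close>, and the remaining factor, bounded on \<open>(0,\<infinity>)\<close>, is constant.
\<close>

lemma poly_0_le_if_le_on_pos:
  fixes q r :: "real poly"
  assumes "\<forall>t>0. poly q t \<le> poly r t"
  shows "poly q 0 \<le> poly r 0"
proof -
  have "(poly (r - q) \<longlongrightarrow> poly (r - q) 0) (at_right 0)"
    by (intro tendsto_within_subset[OF isCont_tendsto_compose[of _ "poly (r - q)" "\<lambda>x. x"]]) auto
  moreover have "\<forall>\<^sub>F t in at_right 0. 0 \<le> poly (r - q) t"
    using assms by (auto intro!: eventually_at_rightI[of 0 1])
  ultimately have "0 \<le> poly (r - q) 0"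
    by (rule tendsto_lowerbound) simp
  then show ?thesis by simp
qed

lemma poly_0_eq_0_if_power_bounded:
  fixes q :: "real poly"
  assumes "\<forall>t>0. \<bar>poly q t\<bar> \<le> b * t ^ k" and "k > 0"
  shows "poly q 0 = 0"
proof -
  have "poly q t \<le> poly (monom b k) t \<and> poly (- monom b k) t \<le> poly q t" if "t > 0" for t
    using assms(1) that by (auto simp: poly_monom abs_le_iff)
  then have "poly q 0 \<le> poly (monom b k) 0 \<and> poly (- monom b k) 0 \<le> poly q 0"
    by (blast intro: poly_0_le_if_le_on_pos)
  then show ?thesis
    using assms(2) by (simp add: poly_monom zero_power)
qed

lemma degree_eq_0_if_bounded_on_pos:
  fixes q :: "real poly"
  assumes bounded: "\<forall>t>0. \<bar>poly q t\<bar> \<le> b"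
  shows "degree q = 0"
proof (rule ccontr)
  assume deg: "degree q \<noteq> 0"
  \<comment> \<open>The reflected polynomial \<open>t\<^sup>d q(1/t)\<close> has constant term \<open>lead_coeff q\<close>.\<close>
  have "\<bar>poly (reflect_poly q) t\<bar> \<le> b * t ^ degree q" if "t > 0" for t
    using bounded[rule_format, of "1/t"] that
    by (simp add: poly_reflect_poly_nz inverse_eq_divide abs_mult mult.commute)
  then have "poly (reflect_poly q) 0 = 0"
    using deg by (intro poly_0_eq_0_if_power_bounded) auto
  then have "q = 0"
    by (simp add: poly_0_coeff_0)
  with deg show False by simp
qed

lemma vanishing_order_eq_if_power_bounds:
  fixes p q :: "real poly"
  assumes p_eq: "p = [:0, 1:] ^ m * q" and q0: "poly q 0 \<noteq> 0" and "a > 0"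
    and bounds: "\<forall>t>0. a * t ^ n \<le> poly p t \<and> poly p t \<le> b * t ^ n"
  shows "m = n"
proof -
  have bounds_q: "t ^ n * a \<le> t ^ m * poly q t \<and> t ^ m * poly q t \<le> t ^ n * b" if "t > 0" for t
    using bounds[rule_format, OF that] by (simp add: p_eq poly_power mult.commute)
  consider "m < n" | "n < m" | "m = n" by linarith
  then show ?thesis
  proof cases
    case less: 1
    have "0 \<le> poly q t \<and> poly q t \<le> b * t ^ (n - m)" if t: "t > 0" for t
    proof -
      have "t ^ n = t ^ m * t ^ (n - m)"
        using less by (simp flip: power_add)
      then have "t ^ m * (t ^ (n - m) * a) \<le> t ^ m * poly q t \<and> t ^ m * poly q t \<le> t ^ m * (t ^ (n - m) * b)"
        using bounds_q[OF t] by (simp add: mult.assoc)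
      then have "t ^ (n - m) * a \<le> poly q t \<and> poly q t \<le> t ^ (n - m) * b"
        using t by (simp add: mult_le_cancel_left_pos)
      moreover have "0 \<le> t ^ (n - m) * a" using t \<open>a > 0\<close> by simp
      ultimately show ?thesis by (simp add: mult.commute)
    qed
    then have "poly q 0 = 0"
      using less by (intro poly_0_eq_0_if_power_bounded[of q b "n - m"]) auto
    with q0 show ?thesis by simp
  next
    case greater: 2
    have lower: "poly [:a:] t \<le> poly ([:0, 1:] ^ (m - n) * q) t" if t: "t > 0" for t
    proof -
      have "t ^ m = t ^ n * t ^ (m - n)"
        using greater by (simp flip: power_add)
      then have "t ^ n * a \<le> t ^ n * (t ^ (m - n) * poly q t)"
        using bounds_q[OF t] by (simp add: mult.assoc)
      then show ?thesis
        using t by (simp add: mult_le_cancel_left_pos poly_power)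
    qed
    have "poly [:a:] 0 \<le> poly ([:0, 1:] ^ (m - n) * q) 0"
      using lower by (blast intro: poly_0_le_if_le_on_pos)
    with greater \<open>a > 0\<close> show ?thesis by (simp add: poly_power zero_power)
  qed
qed

lemma poly_eq_monom_if_power_bounds:
  fixes p :: "real poly"
  assumes "a > 0" and bounds: "\<forall>t>0. a * t ^ n \<le> poly p t \<and> poly p t \<le> b * t ^ n"
  shows "\<exists>c. c \<noteq> 0 \<and> p = monom c n"
proof -
  have "p \<noteq> 0" using bounds[rule_format, of 1] \<open>a > 0\<close> by auto
  then obtain q where p_eq: "p = [:0, 1:] ^ order 0 p * q" and "\<not> [:0, 1:] dvd q"
    using order_decomp[of p 0] by auto
  then have q0: "poly q 0 \<noteq> 0" by (simp add: dvd_iff_poly_eq_0)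
  have order: "order 0 p = n"
    using vanishing_order_eq_if_power_bounds[OF p_eq q0 \<open>a > 0\<close> bounds] .
  have q_bounds: "a \<le> poly q t \<and> poly q t \<le> b" if t: "t > 0" for t
    using bounds[rule_format, OF t] t
    by (subst (asm) (1 2) p_eq) (simp add: order poly_power mult_le_cancel_left_pos mult.commute[of _ "t ^ n"])
  have "degree q = 0"
    using q_bounds \<open>a > 0\<close> by (intro degree_eq_0_if_bounded_on_pos[of q b]) (smt (verit))
  then obtain c where "q = [:c:]" by (metis degree_eq_zeroE)
  moreover have "a \<le> c" using q_bounds[of 1] \<open>q = [:c:]\<close> by simp
  ultimately show ?thesis
    using \<open>a > 0\<close> p_eq order by (intro exI[of _ c]) (simp add: monom_altdef mult.commute)
qed

lemma measure_convex_eq_0_iff_aff_dim_less: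
  fixes K :: "'a::euclidean_space set"
  assumes "convex K" and "compact K"
  shows "measure lebesgue K = 0 \<longleftrightarrow> aff_dim K < DIM('a)"
proof -
  have "measure lebesgue K = 0 \<longleftrightarrow> interior K = {}"
    using assms by (simp add: negligible_iff_measure0[symmetric] lmeasurable_compact negligible_convex_interior)
  also have "\<dots> \<longleftrightarrow> aff_dim K < DIM('a)"
    using assms(1) aff_dim_le_DIM[of K]
    by (auto simp: interior_rel_interior_gen rel_interior_eq_empty)
  finally show ?thesis .
qed

theorem corollary3p3:
  fixes \<Phi> :: "'a::euclidean_space set \<Rightarrow> 'a set"
    and K :: "'a set"
    and p :: "real poly"
  assumes "minkowski_valuation \<Phi>"
    and "hausdorff_continuous \<Phi>"
    and "translation_invariant \<Phi>"
    and "volume_condition \<Phi>"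
    and "convex_body K"
    and "\<forall>t>0. measure lebesgue (\<Phi> ((\<lambda>x. t *\<^sub>R x) ` K)) = poly p t"
  shows "(aff_dim K < int DIM('a) \<longrightarrow> (\<forall>l. coeff p l = 0))
       \<and> (aff_dim K = int DIM('a) \<longrightarrow> coeff p DIM('a) \<noteq> 0)
       \<and> (aff_dim K = int DIM('a) \<longrightarrow> (\<forall>l. l \<noteq> DIM('a) \<longrightarrow> coeff p l = 0))"
proof -
  obtain c C where "c > 0" and VC: "\<And>L. convex_body L \<Longrightarrow>
      c * measure lebesgue L \<le> measure lebesgue (\<Phi> L) \<and> measure lebesgue (\<Phi> L) \<le> C * measure lebesgue L"
    using assms(4) unfolding volume_condition_def by blast
  define V where "V = measure lebesgue K"
  have scaled_body: "convex_body ((\<lambda>x. t *\<^sub>R x) ` K)" for t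
    using assms(5) unfolding convex_body_def
    by (auto intro!: compact_continuous_image continuous_intros convex_scaling)
  have bounds: "c * V * t ^ DIM('a) \<le> poly p t \<and> poly p t \<le> C * V * t ^ DIM('a)" if "t > 0" for t
    using VC[OF scaled_body, of t] assms(6) that measure_lebesgue_affine[of t 0 K]
    by (simp add: V_def mult_ac)
  have V_zero: "V = 0 \<longleftrightarrow> aff_dim K < DIM('a)"
    using assms(5) by (simp add: V_def convex_body_def measure_convex_eq_0_iff_aff_dim_less)
  have "p = 0" if "V = 0"
  proof -
    have "poly p t = 0" if "t > 0" for t
      using bounds[OF that] \<open>V = 0\<close> by simp
    then have "{0<..} \<subseteq> {t. poly p t = 0}" by auto
    then show ?thesis
      using poly_roots_finite[of p] infinite_Ioi[of "0::real"] finite_subset by blast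
  qed
  moreover have "\<exists>a. a \<noteq> 0 \<and> p = monom a DIM('a)" if "V \<noteq> 0"
  proof (rule poly_eq_monom_if_power_bounds[of "c * V"])
    show "c * V > 0"
      using \<open>V \<noteq> 0\<close> \<open>c > 0\<close> by (simp add: V_def zero_less_measure_iff)
  qed (use bounds in auto)
  ultimately show ?thesis
    using V_zero aff_dim_le_DIM[of K] by (auto simp: coeff_monom)
qed

end
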